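(* Let $\nu\in A_2$. Then $\mathcal W_\nu(\mathbb R^n)\subset\mathrm{VMO}_\nu(\mathbb R^n)$.
   Context: $A_2$: weights $w$ with $\sup_Q(\frac1{|Q|}\int_Qw)(\frac1{|Q|}\int_Qw^{-1})<\infty$; $w(E)=\int_Ew$. $\mathrm{VMO}_\nu(\mathbb R^n)$: $b\in L^1_{loc}$ with $\sup_B\frac1{\nu(B)}\int_B|b-\langle b\rangle_B|<\infty$ over balls, this quantity tending to $0$ uniformly as the radius $\to0$, as the radius $\to\infty$, and for $B\subset\mathbb R^n\setminus B(x_0,a)$ as $a\to\infty$ ($x_0$ fixed). $\mathcal D$ is the standard dyadic system, $cQ$ the concentric dilate. $\ell^{n,\infty}$: sequences with $\sup_kk^{1/n}a_k^*<\infty$. $\mathcal W_\nu(\mathbb R^n)$: $b\in L^1_{loc}$ such that $\big\{\frac1{\nu(20\sqrt nQ)}\int_{20\sqrt nQ}|b-\langle b\rangle_{20\sqrt nQ}|\big\}_{Q\in\mathcal D}\in\ell^{n,\infty}$. *)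

theory Defs
  imports "HOL-Analysis.Analysis"
begin

definition cube :: "real^'n \<Rightarrow> real \<Rightarrow> (real^'n) set" where
  "cube c l = {x. \<forall>i. \<bar>x$i - c$i\<bar> < l / 2}"

definition wmeas :: "(real^'n \<Rightarrow> real) \<Rightarrow> (real^'n) set \<Rightarrow> real" where
  "wmeas w E = (LINT x:E|lebesgue. w x)"

definition avg :: "(real^'n) set \<Rightarrow> (real^'n \<Rightarrow> real) \<Rightarrow> real" where
  "avg S f = (LINT x:S|lebesgue. f x) / measure lebesgue S"

definition A2 :: "(real^'n \<Rightarrow> real) \<Rightarrow> bool" where
  "A2 w \<longleftrightarrow> (AE x in lebesgue. w x > 0) \<and>
     (\<forall>c l. l > 0 \<longrightarrow> set_integrable lebesgue (cube c l) w
                   \<and> set_integrable lebesgue (cube c l) (\<lambda>x. 1 / w x)) \<and>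
     (\<exists>C. \<forall>c l. l > 0 \<longrightarrow> avg (cube c l) w * avg (cube c l) (\<lambda>x. 1 / w x) \<le> C)"

definition loc_int :: "(real^'n \<Rightarrow> real) \<Rightarrow> bool" where
  "loc_int b \<longleftrightarrow> (\<forall>x r. set_integrable lebesgue (cball x r) b)"

definition osc :: "(real^'n \<Rightarrow> real) \<Rightarrow> (real^'n) set \<Rightarrow> (real^'n \<Rightarrow> real) \<Rightarrow> real" where
  "osc \<nu> S b = (1 / wmeas \<nu> S) * (LINT x:S|lebesgue. \<bar>b x - avg S b\<bar>)"

definition VMO :: "(real^'n \<Rightarrow> real) \<Rightarrow> (real^'n \<Rightarrow> real) set" where
  "VMO \<nu> = {b. loc_int b \<and>
     (\<exists>C. \<forall>x r. r > 0 \<longrightarrow> osc \<nu> (ball x r) b \<le> C) \<and>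
     (\<forall>\<epsilon>>0. \<exists>\<delta>>0. \<forall>x r. 0 < r \<and> r < \<delta> \<longrightarrow> osc \<nu> (ball x r) b < \<epsilon>) \<and>
     (\<forall>\<epsilon>>0. \<exists>R. \<forall>x r. r > R \<longrightarrow> osc \<nu> (ball x r) b < \<epsilon>) \<and>
     (\<forall>\<epsilon>>0. \<exists>a. \<forall>x r. r > 0 \<and> ball x r \<subseteq> - ball 0 a \<longrightarrow> osc \<nu> (ball x r) b < \<epsilon>)}"

text \<open>Dyadic cube 2^{-k}([0,1)^n + m), k integer, m integer vector: centre and side length.\<close>
definition dyad_side :: "int \<Rightarrow> real" where
  "dyad_side k = 2 powr (- real_of_int k)"

definition dyad_centre :: "int \<Rightarrow> int^'n \<Rightarrow> real^'n" where
  "dyad_centre k m = (\<chi> i. (real_of_int (m$i) + 1/2) * dyad_side k)"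

definition dyad_dilate :: "real \<Rightarrow> int \<Rightarrow> int^'n \<Rightarrow> (real^'n) set" where
  "dyad_dilate c k m = cube (dyad_centre k m) (c * dyad_side k)"

definition decr_rearr :: "('i \<Rightarrow> real) \<Rightarrow> nat \<Rightarrow> real" where
  "decr_rearr a k = Inf {t. t \<ge> 0 \<and> finite {i. \<bar>a i\<bar> > t} \<and> card {i. \<bar>a i\<bar> > t} < k}"

definition weak_l :: "nat \<Rightarrow> ('i \<Rightarrow> real) \<Rightarrow> bool" where
  "weak_l p a \<longleftrightarrow>
     (\<forall>k\<ge>1. {t. t \<ge> 0 \<and> finite {i. \<bar>a i\<bar> > t} \<and> card {i. \<bar>a i\<bar> > t} < k} \<noteq> {}) \<and>
     (\<exists>C. \<forall>k\<ge>1. real k powr (1 / real p) * decr_rearr a k \<le> C)"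

definition W_space :: "(real^'n \<Rightarrow> real) \<Rightarrow> (real^'n \<Rightarrow> real) set" where
  "W_space \<nu> = {b. loc_int b \<and>
     weak_l CARD('n)
       (\<lambda>(k::int, m::int^'n). osc \<nu> (dyad_dilate (20 * sqrt (real CARD('n))) k m) b)}"

end

theory Submission
  imports Defs
begin

text \<open>
  A ball \<open>B = B(x, r)\<close> with \<open>r \<le> 2^-k < 2r\<close> lies in the dilate \<open>Q = 20\<surd>n Q\<^sub>0\<close> of the dyadic
  cube \<open>Q\<^sub>0\<close> of side \<open>2^-k\<close> containing \<open>x\<close>, and it contains a cube \<open>Q'\<close> with \<open>|Q| / |Q'|\<close>
  bounded by a dimensional constant. For \<open>\<nu> \<in> A\<^sub>2\<close>, the Cauchy-Schwarz bound
  \<open>|Q'|\<^sup>2 \<le> \<nu>(Q') \<nu>\<^sup>-\<^sup>1(Q')\<close> combined with the \<open>A\<^sub>2\<close> bound on \<open>Q\<close> gives \<open>\<nu>(Q) \<lesssim> \<nu>(Q') \<le> \<nu>(B)\<close>,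
  while \<open>\<integral>\<^sub>B |b - b\<^sub>B| \<le> 2 \<integral>\<^sub>Q |b - b\<^sub>Q|\<close>.
  So the weighted oscillation over \<open>B\<close> is dominated by the term of the \<open>\<W>\<^sub>\<nu>\<close> sequence
  belonging to \<open>Q\<close>. A sequence in \<open>\<ell>\<^sup>n\<^sup>,\<^sup>\<infinity>\<close> is bounded and exceeds any \<open>\<epsilon> > 0\<close> only finitely
  often; those finitely many dyadic cubes have scales bounded above and below and lie in a
  bounded region, which gives the three vanishing conditions of \<open>VMO\<^sub>\<nu>\<close>.
\<close>

section \<open>Set integrals of real functions\<close>

lemma set_integral_nonneg_AE:
  fixes f :: "_ \<Rightarrow> real"
  assumes "AE x in M. x \<in> A \<longrightarrow> 0 \<le> f x"
  shows "0 \<le> (LINT x:A|M. f x)"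
  unfolding set_lebesgue_integral_def
  by (rule integral_nonneg_AE) (use assms in \<open>auto elim!: eventually_mono simp: indicator_def\<close>)

lemma set_integral_mono_set_nonneg:
  fixes f :: "_ \<Rightarrow> real"
  assumes "A \<in> sets M" "A \<subseteq> B" "set_integrable M B f" "AE x in M. x \<in> B \<longrightarrow> 0 \<le> f x"
  shows "(LINT x:A|M. f x) \<le> (LINT x:B|M. f x)"
proof -
  have "set_integrable M A f" by (rule set_integrable_subset[OF assms(3,1,2)])
  then show ?thesis
    using assms(2-4) unfolding set_lebesgue_integral_def set_integrable_def
    by (intro integral_mono_AE) (auto elim!: eventually_mono simp: indicator_def)
qed

lemma set_integrable_const_fmeasurable:
  assumes "S \<in> fmeasurable M"
  shows "set_integrable M S (\<lambda>x. c :: real)"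
  unfolding set_integrable_def using assms
  by (intro integrable_scaleR_left) (simp add: integrable_indicator_iff fmeasurable_def)

lemma set_integral_const_fmeasurable:
  assumes "S \<in> fmeasurable M"
  shows "(LINT x:S|M. c) = measure M S * (c :: real)"
  using set_integral_const[where c = c, OF fmeasurableD[OF assms]
      fmeasurableD2[OF assms, folded infinity_ennreal_def]]
  by simp

lemma sq_le_mult_if_AM_GM_bound:
  fixes m A B :: real
  assumes "0 \<le> m" "0 \<le> A" "0 \<le> B" and bound: "\<And>t. t > 0 \<Longrightarrow> 2 * m \<le> t * A + B / t"
  shows "m\<^sup>2 \<le> A * B"
proof (cases "m = 0")
  case False
  with assms have m: "m > 0" by simp
  show ?thesis
  proof (cases "A = 0")
    case True
    have "2 * m \<le> B / ((B + 1) / m)" using bound[of "(B + 1) / m"] m assms True by simp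
    also have "\<dots> < m" using m assms by (simp add: field_simps)
    finally show ?thesis using m by simp
  next
    case False
    with assms have A: "A > 0" by simp
    have "2 * m \<le> m + B / (m / A)" using bound[of "m / A"] m A by simp
    then have "m \<le> A * B / m" using A m by (simp add: field_simps)
    then show ?thesis using m by (simp add: field_simps power2_eq_square)
  qed
qed (use assms in simp)

text \<open>Cauchy-Schwarz in disguise: integrate \<open>2 \<le> t w + 1/(t w)\<close> and optimise over \<open>t\<close>.\<close>

lemma measure_sq_le_set_integral_mult_inverse:
  fixes w :: "'a \<Rightarrow> real"
  assumes S: "S \<in> fmeasurable M"
    and iw: "set_integrable M S w" and iw': "set_integrable M S (\<lambda>x. 1 / w x)"
    and pos: "AE x in M. w x > 0"
  shows "(measure M S)\<^sup>2 \<le> (LINT x:S|M. w x) * (LINT x:S|M. 1 / w x)"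
proof (rule sq_le_mult_if_AM_GM_bound)
  show "0 \<le> (LINT x:S|M. w x)" "0 \<le> (LINT x:S|M. 1 / w x)"
    by (rule set_integral_nonneg_AE, use pos in \<open>auto elim: eventually_mono\<close>)+
  fix t :: real
  assume t: "t > 0"
  have iw_t: "set_integrable M S (\<lambda>x. t * w x)" by (rule set_integrable_mult_right) (rule iw)
  have iw'_t: "set_integrable M S (\<lambda>x. 1 / w x / t)" by (rule set_integrable_divide) (rule iw')
  have pointwise: "2 \<le> t * w x + 1 / w x / t" if "w x > 0" for x
  proof -
    have "0 \<le> (t * w x - 1)\<^sup>2" by simp
    then show ?thesis using that t by (simp add: field_simps power2_eq_square)
  qed
  have "2 * measure M S = (LINT x:S|M. 2)"
    by (simp add: set_integral_const_fmeasurable[OF S])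
  also have "\<dots> \<le> (LINT x:S|M. t * w x + 1 / w x / t)"
    using S iw_t iw'_t pos pointwise
    by (intro set_integral_mono_AE set_integrable_const_fmeasurable set_integral_add(1))
       (auto elim: eventually_mono)
  also have "\<dots> = t * (LINT x:S|M. w x) + (LINT x:S|M. 1 / w x) / t"
    by (simp only: set_integral_add(2)[OF iw_t iw'_t] set_integral_mult_right set_integral_divide_zero)
  finally show "2 * measure M S \<le> t * (LINT x:S|M. w x) + (LINT x:S|M. 1 / w x) / t" .
qed simp

lemma set_integral_abs_diff_mean_le:
  fixes b :: "'a \<Rightarrow> real"
  assumes S: "S \<in> fmeasurable M" "measure M S > 0" and ib: "set_integrable M S b"
  shows "(LINT x:S|M. \<bar>b x - (LINT y:S|M. b y) / measure M S\<bar>) \<le> 2 * (LINT x:S|M. \<bar>b x - c\<bar>)"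
proof -
  let ?m = "measure M S" and ?I = "LINT y:S|M. b y"
  let ?a = "?I / ?m"
  have ic: "\<And>c. set_integrable M S (\<lambda>x. c :: real)"
    by (rule set_integrable_const_fmeasurable[OF S(1)])
  have ib_shift: "\<And>c. set_integrable M S (\<lambda>x. \<bar>b x - c\<bar>)"
    using ib ic by (intro set_integrable_abs set_integral_diff(1))
  note ibc = ib_shift[of c] and iba = ib_shift[of ?a]
  have "(LINT x:S|M. b x - c) = ?I - ?m * c"
    using ib ic by (simp add: set_integral_const_fmeasurable[OF S(1)])
  then have "\<bar>?I - ?m * c\<bar> \<le> (LINT x:S|M. \<bar>b x - c\<bar>)"
    using set_integral_norm_bound[of M S "\<lambda>x. b x - c"] ib ic by simp
  moreover have "?m * \<bar>c - ?a\<bar> = \<bar>?I - ?m * c\<bar>"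
    using S(2) by (simp add: abs_mult[symmetric] field_simps abs_minus_commute)
  ultimately have mean_close: "?m * \<bar>c - ?a\<bar> \<le> (LINT x:S|M. \<bar>b x - c\<bar>)" by simp
  have "(LINT x:S|M. \<bar>b x - ?a\<bar>) \<le> (LINT x:S|M. \<bar>b x - c\<bar> + \<bar>c - ?a\<bar>)"
    by (rule set_integral_mono) (use ibc ic iba in auto)
  also have "\<dots> = (LINT x:S|M. \<bar>b x - c\<bar>) + ?m * \<bar>c - ?a\<bar>"
    using ibc ic by (simp add: set_integral_const_fmeasurable[OF S(1)])
  finally show ?thesis using mean_close by simp
qed

lemma set_integral_abs_diff_mean_subset_le:
  fixes b :: "'a \<Rightarrow> real"
  assumes "B \<subseteq> Q" "B \<in> fmeasurable M" "Q \<in> fmeasurable M" "measure M B > 0"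
    and ib: "set_integrable M Q b"
  shows "(LINT x:B|M. \<bar>b x - (LINT y:B|M. b y) / measure M B\<bar>)
    \<le> 2 * (LINT x:Q|M. \<bar>b x - (LINT y:Q|M. b y) / measure M Q\<bar>)"
proof -
  let ?c = "(LINT y:Q|M. b y) / measure M Q"
  have "set_integrable M Q (\<lambda>x. \<bar>b x - ?c\<bar>)"
    using ib set_integrable_const_fmeasurable[OF assms(3)]
    by (intro set_integrable_abs set_integral_diff(1))
  then have "(LINT x:B|M. \<bar>b x - ?c\<bar>) \<le> (LINT x:Q|M. \<bar>b x - ?c\<bar>)"
    using assms(1,2) by (intro set_integral_mono_set_nonneg) (auto simp: fmeasurable_def)
  moreover have "set_integrable M B b"
    using set_integrable_subset[OF ib _ assms(1)] assms(2) by (simp add: fmeasurable_def)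
  ultimately show ?thesis
    using set_integral_abs_diff_mean_le[OF assms(2,4), of b ?c] by simp
qed

lemma set_integral_weight_le_of_A2_bound:
  fixes \<nu> :: "'a \<Rightarrow> real"
  assumes pos: "AE x in M. \<nu> x > 0" and sub: "Q' \<subseteq> Q"
    and fm: "Q' \<in> fmeasurable M" "Q \<in> fmeasurable M"
    and iv: "set_integrable M Q \<nu>" and iv': "set_integrable M Q (\<lambda>x. 1 / \<nu> x)"
    and m': "measure M Q' > 0"
    and A2: "(LINT x:Q|M. \<nu> x) * (LINT x:Q|M. 1 / \<nu> x) \<le> C * (measure M Q)\<^sup>2"
  shows "(LINT x:Q|M. \<nu> x) \<le> C * (measure M Q / measure M Q')\<^sup>2 * (LINT x:Q'|M. \<nu> x)"
    and "(LINT x:Q'|M. \<nu> x) > 0"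
proof -
  define v s v' s' where "v = (LINT x:Q|M. \<nu> x)" and "s = (LINT x:Q|M. 1 / \<nu> x)"
    and "v' = (LINT x:Q'|M. \<nu> x)" and "s' = (LINT x:Q'|M. 1 / \<nu> x)"
  have Q': "Q' \<in> sets M" using fm(1) by (simp add: fmeasurable_def)
  have "v \<ge> 0" "v' \<ge> 0" unfolding v_def v'_def
    by (rule set_integral_nonneg_AE, use pos in \<open>auto elim: eventually_mono\<close>)+
  have "s' \<le> s" unfolding s_def s'_def
    using pos by (intro set_integral_mono_set_nonneg[OF Q' sub iv']) (auto elim: eventually_mono)
  have CS: "(measure M Q')\<^sup>2 \<le> v' * s'" unfolding v'_def s'_def
    using set_integrable_subset[OF iv Q' sub] set_integrable_subset[OF iv' Q' sub]
    by (intro measure_sq_le_set_integral_mult_inverse[OF fm(1) _ _ pos])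
  then show "v' > 0"
    using m' \<open>v' \<ge> 0\<close> by (metis less_eq_real_def mult_zero_left not_less zero_less_power)
  have "v * (measure M Q')\<^sup>2 \<le> v * (v' * s)"
    using CS \<open>s' \<le> s\<close> \<open>v \<ge> 0\<close> \<open>v' \<ge> 0\<close> by (meson mult_left_mono order_trans)
  also have "\<dots> = v' * (v * s)" by simp
  also have "\<dots> \<le> v' * (C * (measure M Q)\<^sup>2)"
    using A2 \<open>v' \<ge> 0\<close> unfolding v_def s_def by (rule mult_left_mono)
  finally show "v \<le> C * (measure M Q / measure M Q')\<^sup>2 * v'"
    using m' by (simp add: field_simps)
qed

lemma osc_le_osc_of_A2_bound:
  fixes \<nu> b :: "real^'n \<Rightarrow> real"
  assumes pos: "AE x in lebesgue. \<nu> x > 0" and sub: "Q' \<subseteq> B" "B \<subseteq> Q"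
    and fm: "Q' \<in> lmeasurable" "B \<in> lmeasurable" "Q \<in> lmeasurable"
    and iv: "set_integrable lebesgue Q \<nu>" and iv': "set_integrable lebesgue Q (\<lambda>x. 1 / \<nu> x)"
    and ib: "set_integrable lebesgue Q b"
    and m': "measure lebesgue Q' > 0"
    and A2: "avg Q \<nu> * avg Q (\<lambda>x. 1 / \<nu> x) \<le> C"
  shows "osc \<nu> B b \<le> 2 * C * (measure lebesgue Q / measure lebesgue Q')\<^sup>2 * osc \<nu> Q b"
proof -
  define \<rho> where "\<rho> = C * (measure lebesgue Q / measure lebesgue Q')\<^sup>2"
  define I I\<^sub>B where "I = (LINT x:Q|lebesgue. \<bar>b x - avg Q b\<bar>)"
    and "I\<^sub>B = (LINT x:B|lebesgue. \<bar>b x - avg B b\<bar>)"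
  have mQ: "measure lebesgue Q > 0"
    using m' measure_mono_fmeasurable[OF _ fmeasurableD fm(3), of Q'] fm(1) sub by force
  have A2': "wmeas \<nu> Q * (LINT x:Q|lebesgue. 1 / \<nu> x) \<le> C * (measure lebesgue Q)\<^sup>2"
    using A2 mQ unfolding avg_def wmeas_def by (simp add: field_simps power2_eq_square)
  note comparison = set_integral_weight_le_of_A2_bound[OF pos _ fm(1,3) iv iv' m', of C]
  have v: "wmeas \<nu> Q \<le> \<rho> * wmeas \<nu> Q'" and v'_pos: "wmeas \<nu> Q' > 0"
    using comparison sub A2' unfolding \<rho>_def wmeas_def by auto
  have wmeas_mono: "wmeas \<nu> A \<le> wmeas \<nu> A'"
    if "A \<subseteq> A'" "A' \<subseteq> Q" "A \<in> lmeasurable" "A' \<in> lmeasurable" for A A'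
    unfolding wmeas_def using pos that
    by (intro set_integral_mono_set_nonneg set_integrable_subset[OF iv]) (auto elim: eventually_mono)
  have "wmeas \<nu> Q' \<le> wmeas \<nu> B" "wmeas \<nu> B \<le> wmeas \<nu> Q"
    using wmeas_mono sub fm by auto
  moreover from this v v'_pos have "\<rho> \<ge> 0" by (smt (verit) mult_neg_pos)
  ultimately have weights:
      "wmeas \<nu> B \<le> wmeas \<nu> Q" "wmeas \<nu> B > 0" "wmeas \<nu> Q \<le> \<rho> * wmeas \<nu> B"
    using v v'_pos mult_left_mono[of "wmeas \<nu> Q'" "wmeas \<nu> B" \<rho>] by auto
  have "measure lebesgue B > 0"
    using m' measure_mono_fmeasurable[OF sub(1) fmeasurableD fm(2)] fm(1) by simp
  then have "I\<^sub>B \<le> 2 * I"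
    unfolding I_def I\<^sub>B_def avg_def
    by (rule set_integral_abs_diff_mean_subset_le[OF sub(2) fm(2,3) _ ib])
  moreover have "I \<ge> 0" unfolding I_def by (rule set_integral_nonneg_AE) auto
  ultimately have "I\<^sub>B / wmeas \<nu> B \<le> 2 * I / wmeas \<nu> B"
    using weights by (simp add: divide_right_mono)
  also have "\<dots> \<le> 2 * \<rho> * (I / wmeas \<nu> Q)"
    using weights \<open>I \<ge> 0\<close> by (simp add: field_simps mult_left_mono)
  finally show ?thesis unfolding osc_def \<rho>_def I_def I\<^sub>B_def by simp
qed

section \<open>Cubes and dyadic cubes\<close>

lemma cube_eq_box:
  fixes c :: "real^'n"
  shows "cube c l = box (c - (\<chi> i. l / 2)) (c + (\<chi> i. l / 2))"
proof -
  have "\<bar>x$i - c$i\<bar> < l / 2 \<longleftrightarrow> c$i - l / 2 < x$i \<and> x$i < c$i + l / 2"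
    for x :: "real^'n" and i
    unfolding abs_less_iff by linarith
  then show ?thesis by (auto simp: cube_def mem_box_cart)
qed

lemma lmeasurable_cube: "cube c l \<in> lmeasurable"
  unfolding cube_eq_box by (rule lmeasurable_box)

lemma bounded_cube: "bounded (cube c l)"
  unfolding cube_eq_box by (rule bounded_box)

lemma measure_cube:
  fixes c :: "real^'n"
  assumes "l > 0"
  shows "measure lebesgue (cube c l) = l ^ CARD('n)"
proof -
  let ?a = "c - (\<chi> i. l / 2)" and ?b = "c + (\<chi> i. l / 2)"
  have "measure lebesgue (cube c l) = measure lborel (cbox ?a ?b)"
    by (simp add: cube_eq_box measure_lborel_box_eq measure_lborel_cbox_eq)
  also have "\<dots> = (\<Prod>i\<in>UNIV. ?b$i - ?a$i)"
    by (rule content_cbox_cart) (use assms in \<open>auto simp: interval_eq_empty_cart\<close>)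
  finally show ?thesis by simp
qed

lemma cube_subset_ball:
  fixes x :: "real^'n"
  assumes "r > 0"
  shows "cube x (r / CARD('n)) \<subseteq> ball x r"
proof
  fix y
  assume y: "y \<in> cube x (r / CARD('n))"
  have "norm (x - y) \<le> (\<Sum>i\<in>UNIV. \<bar>(x - y)$i\<bar>)" by (rule norm_le_l1_cart)
  also have "\<dots> \<le> (\<Sum>i\<in>(UNIV::'n set). r / CARD('n) / 2)"
    using y unfolding cube_def by (intro sum_mono) (auto simp: abs_minus_commute less_imp_le)
  also have "\<dots> < r" using assms by simp
  finally show "y \<in> ball x r" by (simp add: dist_norm)
qed

lemma dyad_side_pos: "dyad_side k > 0"
  unfolding dyad_side_def by simp

lemma dyad_side_less_iff: "dyad_side k < dyad_side k' \<longleftrightarrow> k' < k"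
  unfolding dyad_side_def by simp

lemma exists_dyad_side_between:
  assumes "r > 0"
  shows "\<exists>k. r \<le> dyad_side k \<and> dyad_side k < 2 * r"
proof (intro exI conjI)
  let ?j = "\<lceil>log 2 r\<rceil>"
  have side: "dyad_side (- ?j) = 2 powr ?j" unfolding dyad_side_def by simp
  have "r = 2 powr (log 2 r)" using assms by simp
  also have "\<dots> \<le> 2 powr ?j" by (intro powr_mono) auto
  finally show "r \<le> dyad_side (- ?j)" unfolding side .
  have "2 powr ?j < 2 powr (log 2 r + 1)" by (intro powr_less_mono) linarith+
  also have "\<dots> = 2 * r" using assms by (simp add: powr_add)
  finally show "dyad_side (- ?j) < 2 * r" unfolding side .
qed

definition dyad_index :: "real^'n \<Rightarrow> int \<Rightarrow> int^'n" where
  "dyad_index x k = (\<chi> i. \<lfloor>x$i / dyad_side k\<rfloor>)"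

lemma dist_dyad_centre_dyad_index:
  "\<bar>x$i - dyad_centre k (dyad_index x k) $ i\<bar> \<le> dyad_side k / 2"
proof -
  let ?s = "dyad_side k" and ?f = "\<lfloor>x$i / dyad_side k\<rfloor>"
  have s: "?s > 0" by (rule dyad_side_pos)
  have bounds: "real_of_int ?f * ?s \<le> x$i" "x$i \<le> (real_of_int ?f + 1) * ?s"
    using s by (simp_all add: pos_le_divide_eq[symmetric] pos_divide_le_eq[symmetric] less_imp_le)
  have centre: "dyad_centre k (dyad_index x k) $ i = (real_of_int ?f + 1 / 2) * ?s"
    by (simp add: dyad_index_def dyad_centre_def)
  show ?thesis
    unfolding centre abs_le_iff using bounds by (simp add: algebra_simps)
qed

lemma ball_subset_dyad_dilate:
  fixes x :: "real^'n"
  assumes "r \<le> dyad_side k" "3 \<le> c"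
  shows "ball x r \<subseteq> dyad_dilate c k (dyad_index x k)"
proof
  fix y
  assume y: "y \<in> ball x r"
  have "\<bar>y$i - dyad_centre k (dyad_index x k) $ i\<bar> < c * dyad_side k / 2" for i
  proof -
    have "\<bar>(y - x)$i\<bar> \<le> norm (y - x)" by (rule component_le_norm_cart)
    also have "\<dots> < dyad_side k" using y assms(1) by (simp add: dist_norm norm_minus_commute)
    finally have "\<bar>y$i - x$i\<bar> < dyad_side k" by simp
    moreover have "3 * dyad_side k \<le> c * dyad_side k"
      using assms(2) dyad_side_pos[of k] by (intro mult_right_mono) auto
    ultimately show ?thesis
      using dist_dyad_centre_dyad_index[of x i k] by linarith
  qed
  then show "y \<in> dyad_dilate c k (dyad_index x k)"
    by (simp add: dyad_dilate_def cube_def)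
qed

lemma bounded_dyad_index_eq: "bounded {x :: real^'n. dyad_index x k = m}"
proof (rule bounded_subset[OF bounded_cube])
  show "{x. dyad_index x k = m} \<subseteq> cube (dyad_centre k m) (2 * dyad_side k)"
  proof
    fix x :: "real^'n"
    assume "x \<in> {x. dyad_index x k = m}"
    then have "\<bar>x$i - dyad_centre k m $ i\<bar> < 2 * dyad_side k / 2" for i
      using dist_dyad_centre_dyad_index[of x i k] dyad_side_pos[of k] by simp
    then show "x \<in> cube (dyad_centre k m) (2 * dyad_side k)"
      by (simp add: cube_def)
  qed
qed

lemma measure_dyad_dilate_div_measure_cube_le:
  fixes x :: "real^'n" and m :: "int^'n"
  assumes "0 < r" "dyad_side k < 2 * r" "c > 0"
  shows "measure lebesgue (dyad_dilate c k m) / measure lebesgue (cube x (r / CARD('n)))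
    \<le> (2 * c * CARD('n)) ^ CARD('n)"
proof -
  have "c * dyad_side k > 0" using assms(3) dyad_side_pos by simp
  then have "measure lebesgue (dyad_dilate c k m) / measure lebesgue (cube x (r / CARD('n)))
      = (c * dyad_side k * CARD('n) / r) ^ CARD('n)"
    using assms(1) by (simp add: dyad_dilate_def measure_cube power_divide power_mult_distrib)
  also have "\<dots> \<le> (2 * c * CARD('n)) ^ CARD('n)"
    using assms dyad_side_pos[of k] by (intro power_mono) (auto simp: field_simps)
  finally show ?thesis .
qed

lemma osc_nonneg:
  fixes \<nu> :: "real^'n \<Rightarrow> real"
  assumes "AE x in lebesgue. \<nu> x > 0"
  shows "osc \<nu> S b \<ge> 0"
  unfolding osc_def wmeas_def using assms
  by (intro mult_nonneg_nonneg divide_nonneg_nonneg set_integral_nonneg_AE) (auto elim: eventually_mono)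

lemma A2E:
  fixes \<nu> :: "real^'n \<Rightarrow> real"
  assumes "A2 \<nu>"
  obtains C where "C \<ge> 0" and "AE x in lebesgue. \<nu> x > 0"
    and "\<And>c l. l > 0 \<Longrightarrow> set_integrable lebesgue (cube c l) \<nu>"
    and "\<And>c l. l > 0 \<Longrightarrow> set_integrable lebesgue (cube c l) (\<lambda>x. 1 / \<nu> x)"
    and "\<And>c l. l > 0 \<Longrightarrow> avg (cube c l) \<nu> * avg (cube c l) (\<lambda>x. 1 / \<nu> x) \<le> C"
proof -
  obtain C where pos: "AE x in lebesgue. \<nu> x > 0"
    and A2: "\<And>c l. l > 0 \<Longrightarrow> avg (cube c l) \<nu> * avg (cube c l) (\<lambda>x. 1 / \<nu> x) \<le> C"
    using assms unfolding A2_def by blast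
  have "0 \<le> avg (cube 0 1) \<nu> * avg (cube (0 :: real^'n) 1) (\<lambda>x. 1 / \<nu> x)"
    using pos unfolding avg_def
    by (intro mult_nonneg_nonneg divide_nonneg_nonneg set_integral_nonneg_AE) (auto elim: eventually_mono)
  with A2[of 1 0] have "C \<ge> 0" by simp
  with pos A2 assms show ?thesis using that unfolding A2_def by blast
qed

lemma osc_ball_le_osc_dyad_dilate:
  fixes \<nu> b :: "real^'n \<Rightarrow> real"
  assumes "A2 \<nu>" and b: "loc_int b"
  obtains K where "K \<ge> 0"
    and "\<And>x r k. 0 < r \<Longrightarrow> r \<le> dyad_side k \<Longrightarrow> dyad_side k < 2 * r \<Longrightarrow>
      osc \<nu> (ball x r) b \<le> K * osc \<nu> (dyad_dilate (20 * sqrt CARD('n)) k (dyad_index x k)) b"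
proof -
  let ?n = "real CARD('n)"
  let ?c = "20 * sqrt ?n"
  obtain C where "C \<ge> 0" and pos: "AE x in lebesgue. \<nu> x > 0"
    and iv: "\<And>c l. l > 0 \<Longrightarrow> set_integrable lebesgue (cube c l) \<nu>"
    and iv': "\<And>c l. l > 0 \<Longrightarrow> set_integrable lebesgue (cube c l) (\<lambda>x. 1 / \<nu> x)"
    and A2: "\<And>c l. l > 0 \<Longrightarrow> avg (cube c l) \<nu> * avg (cube c l) (\<lambda>x. 1 / \<nu> x) \<le> C"
    using A2E[OF assms(1)] by blast
  define K where "K = 2 * C * ((2 * ?c * ?n) ^ CARD('n))\<^sup>2"
  have "K \<ge> 0" unfolding K_def using \<open>C \<ge> 0\<close> by simp
  moreover have "osc \<nu> (ball x r) b \<le> K * osc \<nu> (dyad_dilate ?c k (dyad_index x k)) b"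
    if r: "0 < r" "r \<le> dyad_side k" "dyad_side k < 2 * r" for x r k
  proof -
    let ?s = "dyad_side k"
    let ?Q = "dyad_dilate ?c k (dyad_index x k)" and ?Q' = "cube x (r / ?n)"
    have Q: "?Q = cube (dyad_centre k (dyad_index x k)) (?c * ?s)"
      unfolding dyad_dilate_def ..
    have l: "?c * ?s > 0" using dyad_side_pos by simp
    have "1 \<le> sqrt ?n" by simp
    then have "3 \<le> ?c" by linarith
    then have sub: "?Q' \<subseteq> ball x r" "ball x r \<subseteq> ?Q"
      using cube_subset_ball[OF r(1), of x] ball_subset_dyad_dilate[OF r(2), of ?c x] by auto
    have ib: "set_integrable lebesgue ?Q b"
      using b bounded_cube lmeasurable_cube unfolding Q loc_int_def bounded_subset_cball
      by (meson fmeasurableD set_integrable_subset)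
    have "osc \<nu> (ball x r) b \<le> 2 * C * (measure lebesgue ?Q / measure lebesgue ?Q')\<^sup>2 * osc \<nu> ?Q b"
      using iv[OF l] iv'[OF l] A2[OF l] r(1) measure_cube[of "r / ?n" x]
      by (intro osc_le_osc_of_A2_bound[OF pos sub _ _ _ _ _ ib])
        (auto simp: Q lmeasurable_cube)
    also have "\<dots> \<le> K * osc \<nu> ?Q b"
    proof -
      have "(measure lebesgue ?Q / measure lebesgue ?Q')\<^sup>2 \<le> ((2 * ?c * ?n) ^ CARD('n))\<^sup>2"
        using measure_dyad_dilate_div_measure_cube_le[OF r(1,3), where c = ?c and x = x]
        by (intro power_mono) auto
      then show ?thesis
        unfolding K_def using \<open>C \<ge> 0\<close> osc_nonneg[OF pos]
        by (intro mult_right_mono mult_left_mono) auto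
    qed
    finally show ?thesis .
  qed
  ultimately show ?thesis using that by blast
qed

section \<open>Sequences in the weak space \<open>\<ell>\<^sup>p\<^sup>,\<^sup>\<infinity>\<close>\<close>

lemma weak_l_bounded:
  assumes "weak_l p a"
  shows "\<exists>M. \<forall>i. \<bar>a i\<bar> \<le> M"
proof -
  from assms obtain t where "finite {i. \<bar>a i\<bar> > t}" "card {i. \<bar>a i\<bar> > t} < 1"
    unfolding weak_l_def by fastforce
  then have "\<forall>i. \<bar>a i\<bar> \<le> t" by (auto simp: not_less)
  then show ?thesis by blast
qed

text \<open>If \<open>k\<^sup>1\<^sup>/\<^sup>p a\<^sup>*\<^sub>k \<le> C\<close>, then \<open>a\<^sup>*\<^sub>k < \<epsilon>\<close> as soon as \<open>k\<^sup>1\<^sup>/\<^sup>p > \<bar>C\<bar> / \<epsilon>\<close>, so fewer than \<open>k\<close>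
  entries exceed \<open>\<epsilon>\<close>.\<close>

lemma weak_l_finite_abs_gt:
  assumes w: "weak_l p a" and p: "p \<ge> 1" and \<epsilon>: "\<epsilon> > 0"
  shows "finite {i. \<bar>a i\<bar> > \<epsilon>}"
proof -
  from w obtain C where C: "\<And>k. k \<ge> 1 \<Longrightarrow> real k powr (1 / real p) * decr_rearr a k \<le> C"
    unfolding weak_l_def by blast
  define X where "X = (\<bar>C\<bar> + 1) / \<epsilon>"
  have X: "X > 0" unfolding X_def using \<epsilon> by simp
  define k where "k = nat \<lceil>X powr real p\<rceil> + 1"
  have k: "k \<ge> 1" unfolding k_def by simp
  have "X powr real p \<le> real k" unfolding k_def by linarith
  have "X = (X powr real p) powr (1 / real p)" using p X by (simp add: powr_powr)
  also have "\<dots> \<le> real k powr (1 / real p)"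
    using \<open>X powr real p \<le> real k\<close> by (intro powr_mono2) auto
  finally have kX: "X \<le> real k powr (1 / real p)" .
  define S where "S = {t. t \<ge> 0 \<and> finite {i. \<bar>a i\<bar> > t} \<and> card {i. \<bar>a i\<bar> > t} < k}"
  have "S \<noteq> {}" using w k unfolding weak_l_def S_def by blast
  moreover have "bdd_below S" unfolding S_def by (rule bdd_belowI[of _ 0]) auto
  moreover have "Inf S < \<epsilon>"
  proof (rule ccontr)
    assume "\<not> Inf S < \<epsilon>"
    then have "\<epsilon> \<le> decr_rearr a k" unfolding decr_rearr_def S_def by simp
    have "\<bar>C\<bar> + 1 = X * \<epsilon>" unfolding X_def using \<epsilon> by simp
    also have "\<dots> \<le> real k powr (1 / real p) * decr_rearr a k"
      using kX \<open>\<epsilon> \<le> decr_rearr a k\<close> X \<epsilon> by (intro mult_mono) auto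
    also have "\<dots> \<le> C" using C[OF k] .
    finally show False by simp
  qed
  ultimately obtain t where "t \<in> S" "t < \<epsilon>" by (meson cInf_lessD)
  then have "finite {i. \<bar>a i\<bar> > t}" "{i. \<bar>a i\<bar> > \<epsilon>} \<subseteq> {i. \<bar>a i\<bar> > t}"
    unfolding S_def by auto
  then show ?thesis by (rule finite_subset[rotated])
qed

section \<open>Functions of balls dominated along dyadic cubes\<close>

text \<open>Here \<open>f x r\<close> stands for the oscillation over \<open>B(x, r)\<close> and \<open>a (k, m)\<close> for the term of the
  dyadic sequence indexed by the cube of generation \<open>k\<close> and position \<open>m\<close>.\<close>

context
  fixes f :: "real^'n \<Rightarrow> real \<Rightarrow> real" and a :: "int \<times> (int^'n) \<Rightarrow> real" and K :: real
  assumes K_nonneg: "K \<ge> 0"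
    and dominated: "\<And>x r. r > 0 \<Longrightarrow>
      \<exists>k. r \<le> dyad_side k \<and> dyad_side k < 2 * r \<and> f x r \<le> K * a (k, dyad_index x k)"
    and finite_abs_gt: "\<And>\<epsilon>. \<epsilon> > 0 \<Longrightarrow> finite {i. \<bar>a i\<bar> > \<epsilon>}"
begin

lemma dominated_bounded:
  assumes "\<And>i. \<bar>a i\<bar> \<le> M"
  shows "\<exists>C. \<forall>x r. r > 0 \<longrightarrow> f x r \<le> C"
proof (intro exI allI impI)
  fix x r
  assume "(r :: real) > 0"
  then obtain k where "f x r \<le> K * a (k, dyad_index x k)" using dominated by blast
  also have "\<dots> \<le> K * M" using assms K_nonneg by (intro mult_left_mono) (auto simp: abs_le_iff)
  finally show "f x r \<le> K * M" .
qed

lemma dominated_small_off_finite: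
  assumes "\<epsilon> > 0"
  obtains F where "finite F" and "\<And>x r. r > 0 \<Longrightarrow>
    f x r < \<epsilon> \<or> (\<exists>k. r \<le> dyad_side k \<and> dyad_side k < 2 * r \<and> (k, dyad_index x k) \<in> F)"
proof
  define \<eta> where "\<eta> = \<epsilon> / (K + 1)"
  define F where "F = {i. \<bar>a i\<bar> > \<eta>}"
  have "K * \<eta> < \<epsilon>" unfolding \<eta>_def using assms K_nonneg by (simp add: field_simps)
  show "finite F" unfolding F_def using finite_abs_gt K_nonneg assms by (simp add: \<eta>_def)
  fix x r
  assume "(r :: real) > 0"
  then obtain k where k: "r \<le> dyad_side k" "dyad_side k < 2 * r"
    and f_le: "f x r \<le> K * a (k, dyad_index x k)"
    using dominated by blast
  show "f x r < \<epsilon> \<or> (\<exists>k. r \<le> dyad_side k \<and> dyad_side k < 2 * r \<and> (k, dyad_index x k) \<in> F)"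
  proof (cases "\<bar>a (k, dyad_index x k)\<bar> > \<eta>")
    case False
    then have "a (k, dyad_index x k) \<le> \<eta>" by simp
    then have "K * a (k, dyad_index x k) \<le> K * \<eta>" using K_nonneg by (rule mult_left_mono)
    then show ?thesis using f_le \<open>K * \<eta> < \<epsilon>\<close> by simp
  qed (use k in \<open>auto simp: F_def\<close>)
qed

lemma dominated_vanishing_small_radius:
  assumes "\<epsilon> > 0"
  shows "\<exists>\<delta>>0. \<forall>x r. 0 < r \<and> r < \<delta> \<longrightarrow> f x r < \<epsilon>"
proof -
  obtain F where F: "finite F" and small: "\<And>x r. r > 0 \<Longrightarrow>
    f x r < \<epsilon> \<or> (\<exists>k. r \<le> dyad_side k \<and> dyad_side k < 2 * r \<and> (k, dyad_index x k) \<in> F)"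
    using dominated_small_off_finite[OF assms] by blast
  define k\<^sub>0 where "k\<^sub>0 = Max (insert 0 (fst ` F))"
  have k\<^sub>0: "k \<le> k\<^sub>0" if "(k, m) \<in> F" for k m
    unfolding k\<^sub>0_def using F that by (metis Max_ge finite_imageI finite_insert fst_conv image_eqI insertCI)
  show ?thesis
  proof (intro exI[of _ "dyad_side k\<^sub>0 / 2"] conjI allI impI)
    show "dyad_side k\<^sub>0 / 2 > 0" using dyad_side_pos by simp
    fix x r
    assume r: "0 < r \<and> r < dyad_side k\<^sub>0 / 2"
    have "(k, dyad_index x k) \<notin> F" if "dyad_side k < 2 * r" for k
      using that r k\<^sub>0 dyad_side_less_iff[of k k\<^sub>0] by force
    then show "f x r < \<epsilon>" using small[of r x] r by blast
  qed
qed

lemma dominated_vanishing_large_radius: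
  assumes "\<epsilon> > 0"
  shows "\<exists>R. \<forall>x r. r > R \<longrightarrow> f x r < \<epsilon>"
proof -
  obtain F where F: "finite F" and small: "\<And>x r. r > 0 \<Longrightarrow>
    f x r < \<epsilon> \<or> (\<exists>k. r \<le> dyad_side k \<and> dyad_side k < 2 * r \<and> (k, dyad_index x k) \<in> F)"
    using dominated_small_off_finite[OF assms] by blast
  define k\<^sub>0 where "k\<^sub>0 = Min (insert 0 (fst ` F))"
  have k\<^sub>0: "k\<^sub>0 \<le> k" if "(k, m) \<in> F" for k m
    unfolding k\<^sub>0_def using F that by (metis Min_le finite_imageI finite_insert fst_conv image_eqI insertCI)
  show ?thesis
  proof (intro exI[of _ "dyad_side k\<^sub>0"] allI impI)
    fix x r
    assume r: "r > dyad_side k\<^sub>0"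
    then have "r > 0" using dyad_side_pos[of k\<^sub>0] by simp
    have "(k, dyad_index x k) \<notin> F" if "r \<le> dyad_side k" for k
      using that r k\<^sub>0 dyad_side_less_iff[of k\<^sub>0 k] by force
    then show "f x r < \<epsilon>" using small[OF \<open>r > 0\<close>, of x] by blast
  qed
qed

lemma dominated_vanishing_far:
  assumes "\<epsilon> > 0"
  shows "\<exists>R. \<forall>x r. r > 0 \<and> ball x r \<subseteq> - ball 0 R \<longrightarrow> f x r < \<epsilon>"
proof -
  obtain F where F: "finite F" and small: "\<And>x r. r > 0 \<Longrightarrow>
    f x r < \<epsilon> \<or> (\<exists>k. r \<le> dyad_side k \<and> dyad_side k < 2 * r \<and> (k, dyad_index x k) \<in> F)"
    using dominated_small_off_finite[OF assms] by blast
  have "bounded (\<Union>(k, m)\<in>F. {x :: real^'n. dyad_index x k = m})"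
    using F by (intro bounded_UN) (auto simp: bounded_dyad_index_eq)
  then obtain R where R: "(\<Union>(k, m)\<in>F. {x :: real^'n. dyad_index x k = m}) \<subseteq> ball 0 R"
    using bounded_subset_ballD by blast
  show ?thesis
  proof (intro exI[of _ R] allI impI)
    fix x :: "real^'n" and r :: real
    assume h: "r > 0 \<and> ball x r \<subseteq> - ball 0 R"
    then have "x \<notin> ball 0 R" using centre_in_ball by blast
    then have "(k, dyad_index x k) \<notin> F" for k using R by blast
    then show "f x r < \<epsilon>" using small h by blast
  qed
qed

end

theorem lemma6p2:
  fixes \<nu> :: "real^'n \<Rightarrow> real"
  assumes "A2 \<nu>"
  shows "W_space \<nu> \<subseteq> VMO \<nu>"
proof
  fix b
  assume "b \<in> W_space \<nu>"
  then have b: "loc_int b"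
    and weak: "weak_l CARD('n) (\<lambda>(k, m). osc \<nu> (dyad_dilate (20 * sqrt CARD('n)) k m) b)"
      (is "weak_l _ ?a")
    unfolding W_space_def by auto
  obtain K where K: "K \<ge> 0"
    and ball_le: "\<And>x r k. 0 < r \<Longrightarrow> r \<le> dyad_side k \<Longrightarrow> dyad_side k < 2 * r \<Longrightarrow>
      osc \<nu> (ball x r) b \<le> K * ?a (k, dyad_index x k)"
    using osc_ball_le_osc_dyad_dilate[OF assms b] by auto
  have dominated: "\<And>x r. r > 0 \<Longrightarrow>
      \<exists>k. r \<le> dyad_side k \<and> dyad_side k < 2 * r \<and>
        osc \<nu> (ball x r) b \<le> K * ?a (k, dyad_index x k)"
    using exists_dyad_side_between ball_le by meson
  have finite: "\<And>\<epsilon>. \<epsilon> > 0 \<Longrightarrow> finite {i. \<bar>?a i\<bar> > \<epsilon>}"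
    using weak_l_finite_abs_gt[OF weak] by simp
  obtain M where "\<And>i. \<bar>?a i\<bar> \<le> M" using weak_l_bounded[OF weak] by blast
  then show "b \<in> VMO \<nu>"
    unfolding VMO_def using b
      dominated_bounded[OF K dominated finite]
      dominated_vanishing_small_radius[OF K dominated finite]
      dominated_vanishing_large_radius[OF K dominated finite]
      dominated_vanishing_far[OF K dominated finite]
    by blast
qed

end
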